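(* Let $\gamma$ and $c$ be real constants and let $u(\xi)$, $v(\xi)$ be smooth functions of $\xi\in\mathbb{R}$ satisfying the travelling-wave system \[ -c u' + 3 u u' = - v\,\big(\gamma v'' + 3v^2\big)', \qquad -c v' + (uv)' = -\big(\gamma v'' + 3 v^2\big)', \] with boundary conditions $\lim_{\xi\to\pm\infty} u(\xi) = u_0$ and $\lim_{\xi\to\pm\infty} v(\xi) = 0$. Then for all $\xi$, \[ (u-c)^2\left(u - \tfrac12 v^2\right) = (u_0 - c)^2 u_0 . \]
   Context: This system is obtained from the Burgers–swept KdV system $u_t + 3uu_x = -v\partial_x(3v^2+\gamma v_{xx})$, $v_t + 6vv_x + \gamma v_{xxx} = -\partial_x(uv)$ by the travelling-wave ansatz $u(x,t)=u(\xi)$, $v(x,t)=v(\xi)$ with $\xi = x-ct$; primes denote $d/d\xi$. *)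

theory Defs
  imports "HOL-Analysis.Analysis"
begin

definition smooth :: "(real \<Rightarrow> real) \<Rightarrow> bool" where
  "smooth f \<longleftrightarrow> (\<forall>k x. ((deriv ^^ k) f) differentiable (at x))"

end

theory Submission
  imports Defs
begin

text \<open>Eliminating the dispersive flux \<open>P = \<gamma> v'' + 3 v\<^sup>2\<close> between the two equations
  (the second gives \<open>P' = c v' - (u v)'\<close>) leaves the balance law
  \<open>(3u - c) u' = v ((u v)' - c v')\<close>, which contains no \<open>\<gamma>\<close>.  This is exactly the
  statement that \<open>(u - c)\<^sup>2 (u - v\<^sup>2/2)\<close> has derivative zero, so this quantity is
  constant along the wave; letting \<open>\<xi> \<rightarrow> \<infinity>\<close> identifies the constant.\<close>

lemma smooth_has_real_derivative:
  assumes "smooth f"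
  shows "(f has_real_derivative deriv f x) (at x)"
  using assms unfolding smooth_def
  by (metis funpow_0 DERIV_deriv_iff_real_differentiable)

lemma smooth_field_differentiable:
  assumes "smooth f"
  shows "f field_differentiable at x"
  using smooth_has_real_derivative[OF assms] unfolding field_differentiable_def ..

lemma DERIV_zero_tendsto_at_top_eq:
  fixes f :: "real \<Rightarrow> real"
  assumes "\<And>x. (f has_real_derivative 0) (at x)" and "(f \<longlongrightarrow> L) at_top"
  shows "f x = L"
proof -
  have "(f \<longlongrightarrow> f x) at_top"
    using DERIV_isconst_all assms(1)
    by (intro tendsto_eventually always_eventually) blast
  then show ?thesis
    using assms(2) tendsto_unique trivial_limit_at_top_linorder by blast
qed

lemma first_integral_has_derivative_zero:
  fixes u v u' v' :: "real \<Rightarrow> real" and c :: real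
  assumes du: "\<And>x. (u has_real_derivative u' x) (at x)"
    and dv: "\<And>x. (v has_real_derivative v' x) (at x)"
    and balance: "\<And>x. (3 * u x - c) * u' x = v x * (u' x * v x + u x * v' x - c * v' x)"
  shows "((\<lambda>x. (u x - c)^2 * (u x - (v x)^2 / 2)) has_real_derivative 0) (at x)"
proof -
  have "((\<lambda>x. (u x - c)^2 * (u x - (v x)^2 / 2)) has_real_derivative
      2 * (u x - c) * u' x * (u x - (v x)^2 / 2) + (u x - c)^2 * (u' x - v x * v' x)) (at x)"
    by (auto intro!: derivative_eq_intros du dv simp: power2_eq_square algebra_simps)
  also have "2 * (u x - c) * u' x * (u x - (v x)^2 / 2) + (u x - c)^2 * (u' x - v x * v' x)
      = (u x - c) * ((3 * u x - c) * u' x - v x * (u' x * v x + u x * v' x - c * v' x))"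
    by (simp add: algebra_simps power2_eq_square)
  also have "\<dots> = 0"
    using balance[of x] by simp
  finally show ?thesis .
qed

theorem lemma2p1:
  fixes u v :: "real \<Rightarrow> real" and \<gamma> c u0 :: real
  assumes su: "smooth u" and sv: "smooth v"
    and eq1: "\<And>\<xi>. - c * deriv u \<xi> + 3 * u \<xi> * deriv u \<xi>
                 = - v \<xi> * deriv (\<lambda>x. \<gamma> * deriv (deriv v) x + 3 * (v x)^2) \<xi>"
    and eq2: "\<And>\<xi>. - c * deriv v \<xi> + deriv (\<lambda>x. u x * v x) \<xi>
                 = - deriv (\<lambda>x. \<gamma> * deriv (deriv v) x + 3 * (v x)^2) \<xi>"
    and u_top: "(u \<longlongrightarrow> u0) at_top" and u_bot: "(u \<longlongrightarrow> u0) at_bot"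
    and v_top: "(v \<longlongrightarrow> 0) at_top" and v_bot: "(v \<longlongrightarrow> 0) at_bot"
  shows "\<forall>\<xi>. (u \<xi> - c)^2 * (u \<xi> - (v \<xi>)^2 / 2) = (u0 - c)^2 * u0"
proof
  fix \<xi>
  define P where "P = (\<lambda>x. \<gamma> * deriv (deriv v) x + 3 * (v x)^2)"
  have flux: "deriv P x = c * deriv v x - (deriv u x * v x + u x * deriv v x)" for x
    using eq2[of x] deriv_mult[OF smooth_field_differentiable[OF su] smooth_field_differentiable[OF sv], of x]
    unfolding P_def by linarith
  have balance: "(3 * u x - c) * deriv u x
      = v x * (deriv u x * v x + u x * deriv v x - c * deriv v x)" for x
    using eq1[of x] flux[of x] unfolding P_def by (simp add: algebra_simps)
  have "((\<lambda>x. (u x - c)^2 * (u x - (v x)^2 / 2)) has_real_derivative 0) (at x)" for x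
    using smooth_has_real_derivative[OF su] smooth_has_real_derivative[OF sv] balance
    by (rule first_integral_has_derivative_zero)
  moreover have "((\<lambda>x. (u x - c)^2 * (u x - (v x)^2 / 2)) \<longlongrightarrow> (u0 - c)^2 * (u0 - 0^2 / 2)) at_top"
    by (intro tendsto_intros u_top v_top) simp
  ultimately show "(u \<xi> - c)^2 * (u \<xi> - (v \<xi>)^2 / 2) = (u0 - c)^2 * u0"
    using DERIV_zero_tendsto_at_top_eq by fastforce
qed

end
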